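(* Let $q\in(0,\tfrac12)$ and let $T\sim U(0,1)$, $S\sim U(-1,0)$ be independent. Let $p_3^{SH}$ be the probability that $$P_{T,S}(x)=(T+S-1)x^3+\big(1-T-2S+q(S-1-T)\big)x^2+\big(S+q(T-S)\big)x$$ has exactly three distinct roots in $[0,1]$. Then $$p_3^{SH}=\frac{1}{1-2q}\,\mathrm{Area}(D\cap D_1),$$ where $D=\{(x,y)\in\mathbb{R}^2:\ -1<x<0,\ -\frac{x^2}{4q}-q<y<-q\}$ and $D_1$ is the open quadrilateral with consecutive vertices $A=(-1,-1)$, $B=(-(1-q),-q)$, $O=(0,0)$, $C=(-q,-(1-q))$ (equivalently, $D_1$ is the image of $(-1,0)^2$ under the linear map $(t,s)\mapsto((1-q)t+qs,\ qt+(1-q)s)$).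
   Context: "Area" denotes two-dimensional Lebesgue measure. *)

theory Defs
  imports "HOL-Probability.Probability"
begin

definition P_TS :: "real \<Rightarrow> real \<Rightarrow> real \<Rightarrow> real \<Rightarrow> real" where
  "P_TS q t s x = (t + s - 1) * x ^ 3 + (1 - t - 2 * s + q * (s - 1 - t)) * x ^ 2
                  + (s + q * (t - s)) * x"

definition region_D :: "real \<Rightarrow> (real \<times> real) set" where
  "region_D q = {(x, y). -1 < x \<and> x < 0 \<and> - (x ^ 2) / (4 * q) - q < y \<and> y < - q}"

definition region_D1 :: "real \<Rightarrow> (real \<times> real) set" where
  "region_D1 q = interior (convex hull {(-1, -1), (-(1 - q), -q), (0, 0), (-q, -(1 - q))})"

end

(*
  Since P_{T,S}(x) = x (a x^2 + b x + c) with a + b + c = P_{T,S}(1) = -q < 0, there are three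
  roots in [0,1] iff the quadratic factor has two distinct roots x1, x2 in (0,1). By Vieta,
  c = a x1 x2 and a + b + c = a (1 - x1) (1 - x2), so this happens iff a < 0, c < 0, the
  discriminant is positive and the vertex -b/(2a) lies in (0,1). In the coordinates
  (u, v) = L(T - 1, S), with L the linear map of D1, the coefficients become a = u + v,
  b = -(u + 2v + 2q), c = v + q and the discriminant u^2 + 4q(v + q); for -1 < u < 0 the
  conditions then say precisely (u, v) \<in> D. As (T - 1, S) is uniform on (-1,0)^2, which L maps
  onto D1 with determinant 1 - 2q, the probability is Area(D \<inter> D1) / (1 - 2q).
*)
theory Submission
  imports Defs "HOL-Library.Quadratic_Discriminant"
begin

lemma nn_integral_lborel_shear_snd:
  fixes g :: "real \<times> real \<Rightarrow> ennreal"
  assumes [measurable]: "g \<in> borel_measurable borel"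
  shows "(\<integral>\<^sup>+p. g (fst p, snd p + k * fst p) \<partial>lborel) = (\<integral>\<^sup>+p. g p \<partial>lborel)"
proof -
  have [measurable]: "g \<in> borel_measurable (borel \<Otimes>\<^sub>M borel)"
    by (simp add: borel_prod)
  have "(\<integral>\<^sup>+p. g (fst p, snd p + k * fst p) \<partial>lborel) = (\<integral>\<^sup>+x. \<integral>\<^sup>+y. g (x, k * x + 1 * y) \<partial>lborel \<partial>lborel)"
    by (subst lborel_prod[symmetric], subst lborel.nn_integral_fst[symmetric]) (auto simp: add.commute)
  also have "\<dots> = (\<integral>\<^sup>+x. \<integral>\<^sup>+y. g (x, y) \<partial>lborel \<partial>lborel)"
  proof (rule nn_integral_cong)
    fix x show "(\<integral>\<^sup>+y. g (x, k * x + 1 * y) \<partial>lborel) = (\<integral>\<^sup>+y. g (x, y) \<partial>lborel)"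
      using nn_integral_real_affine[where f = "\<lambda>y. g (x, y)" and c = 1 and t = "k * x"] by simp
  qed
  also have "\<dots> = (\<integral>\<^sup>+p. g p \<partial>lborel)"
    by (subst lborel_prod[symmetric], subst lborel.nn_integral_fst) auto
  finally show ?thesis .
qed

lemma nn_integral_lborel_shear_fst:
  fixes g :: "real \<times> real \<Rightarrow> ennreal"
  assumes [measurable]: "g \<in> borel_measurable borel"
  shows "(\<integral>\<^sup>+p. g (fst p + k * snd p, snd p) \<partial>lborel) = (\<integral>\<^sup>+p. g p \<partial>lborel)"
proof -
  have [measurable]: "g \<in> borel_measurable (borel \<Otimes>\<^sub>M borel)"
    by (simp add: borel_prod)
  have "(\<integral>\<^sup>+p. g (fst p + k * snd p, snd p) \<partial>lborel) = (\<integral>\<^sup>+y. \<integral>\<^sup>+x. g (k * y + 1 * x, y) \<partial>lborel \<partial>lborel)"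
    by (subst lborel_prod[symmetric], subst lborel_pair.nn_integral_snd[symmetric]) (auto simp: add.commute)
  also have "\<dots> = (\<integral>\<^sup>+y. \<integral>\<^sup>+x. g (x, y) \<partial>lborel \<partial>lborel)"
  proof (rule nn_integral_cong)
    fix y show "(\<integral>\<^sup>+x. g (k * y + 1 * x, y) \<partial>lborel) = (\<integral>\<^sup>+x. g (x, y) \<partial>lborel)"
      using nn_integral_real_affine[where f = "\<lambda>x. g (x, y)" and c = 1 and t = "k * y"] by simp
  qed
  also have "\<dots> = (\<integral>\<^sup>+p. g p \<partial>lborel)"
    by (subst lborel_prod[symmetric], subst lborel_pair.nn_integral_snd) auto
  finally show ?thesis .
qed

lemma nn_integral_lborel_affine_diagonal:
  fixes g :: "real \<times> real \<Rightarrow> ennreal"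
  assumes [measurable]: "g \<in> borel_measurable borel" and "a \<noteq> 0" "b \<noteq> 0"
  shows "(\<integral>\<^sup>+p. g p \<partial>lborel) = ennreal (\<bar>a\<bar> * \<bar>b\<bar>) * (\<integral>\<^sup>+p. g (x0 + a * fst p, y0 + b * snd p) \<partial>lborel)"
proof -
  have [measurable]: "g \<in> borel_measurable (borel \<Otimes>\<^sub>M borel)"
    by (simp add: borel_prod)
  have "(\<integral>\<^sup>+p. g p \<partial>lborel) = (\<integral>\<^sup>+x. \<integral>\<^sup>+y. g (x, y) \<partial>lborel \<partial>lborel)"
    by (subst lborel_prod[symmetric], subst lborel.nn_integral_fst) auto
  also have "\<dots> = (\<integral>\<^sup>+x. \<bar>b\<bar> * \<integral>\<^sup>+v. g (x, y0 + b * v) \<partial>lborel \<partial>lborel)"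
  proof (rule nn_integral_cong)
    fix x show "(\<integral>\<^sup>+y. g (x, y) \<partial>lborel) = \<bar>b\<bar> * (\<integral>\<^sup>+v. g (x, y0 + b * v) \<partial>lborel)"
      using nn_integral_real_affine[where f = "\<lambda>y. g (x, y)" and c = b and t = y0] assms by simp
  qed
  also have "\<dots> = \<bar>b\<bar> * (\<integral>\<^sup>+x. \<integral>\<^sup>+v. g (x, y0 + b * v) \<partial>lborel \<partial>lborel)"
    by (rule nn_integral_cmult) measurable
  also have "(\<integral>\<^sup>+x. \<integral>\<^sup>+v. g (x, y0 + b * v) \<partial>lborel \<partial>lborel)
      = \<bar>a\<bar> * (\<integral>\<^sup>+u. \<integral>\<^sup>+v. g (x0 + a * u, y0 + b * v) \<partial>lborel \<partial>lborel)"
    using assms by (intro nn_integral_real_affine) measurable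
  also have "(\<integral>\<^sup>+u. \<integral>\<^sup>+v. g (x0 + a * u, y0 + b * v) \<partial>lborel \<partial>lborel)
      = (\<integral>\<^sup>+p. g (x0 + a * fst p, y0 + b * snd p) \<partial>lborel)"
    by (subst lborel_prod[symmetric], subst lborel.nn_integral_fst[symmetric]) auto
  finally show ?thesis
    by (simp add: ennreal_mult mult.assoc mult.left_commute)
qed

lemma nn_integral_lborel_affine:
  fixes g :: "real \<times> real \<Rightarrow> ennreal"
  assumes [measurable]: "g \<in> borel_measurable borel" and "a \<noteq> 0" "a * d - b * c \<noteq> 0"
  shows "(\<integral>\<^sup>+p. g p \<partial>lborel) = ennreal \<bar>a * d - b * c\<bar> *
           (\<integral>\<^sup>+p. g (x0 + a * fst p + b * snd p, y0 + c * fst p + d * snd p) \<partial>lborel)"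
proof -
  \<comment> \<open>The map factors as a diagonal affine map followed by two shears, each of which preserves
    Lebesgue measure by Fubini and translation invariance.\<close>
  define \<delta> where "\<delta> = a * d - b * c"
  define k1 where "k1 = c / a"
  define k2 where "k2 = a * b / \<delta>"
  define y1 where "y1 = y0 - k1 * x0"
  define x1 where "x1 = x0 - k2 * y1"
  define g1 where "g1 p = g (fst p, snd p + k1 * fst p)" for p
  define g2 where "g2 p = g1 (fst p + k2 * snd p, snd p)" for p
  have [measurable]: "g \<in> borel_measurable (borel \<Otimes>\<^sub>M borel)"
    by (simp add: borel_prod)
  have [measurable]: "g1 \<in> borel_measurable borel" "g2 \<in> borel_measurable borel"
    unfolding g1_def g2_def borel_prod[symmetric] by measurable
  have "\<delta> \<noteq> 0" "\<delta> / a \<noteq> 0"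
    using assms by (simp_all add: \<delta>_def)
  have "(\<integral>\<^sup>+p. g p \<partial>lborel) = (\<integral>\<^sup>+p. g1 p \<partial>lborel)"
    unfolding g1_def by (simp add: nn_integral_lborel_shear_snd)
  also have "\<dots> = (\<integral>\<^sup>+p. g2 p \<partial>lborel)"
    unfolding g2_def by (simp add: nn_integral_lborel_shear_fst)
  also have "\<dots> = ennreal (\<bar>a\<bar> * \<bar>\<delta> / a\<bar>) * (\<integral>\<^sup>+p. g2 (x1 + a * fst p, y1 + \<delta> / a * snd p) \<partial>lborel)"
    by (rule nn_integral_lborel_affine_diagonal) (use \<open>a \<noteq> 0\<close> \<open>\<delta> / a \<noteq> 0\<close> in auto)
  also have "(\<lambda>p. g2 (x1 + a * fst p, y1 + \<delta> / a * snd p))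
      = (\<lambda>p. g (x0 + a * fst p + b * snd p, y0 + c * fst p + d * snd p))"
  proof
    fix p :: "real \<times> real"
    obtain u v where p: "p = (u, v)"
      by fastforce
    have x: "x1 + a * u + k2 * (y1 + \<delta> / a * v) = x0 + a * u + b * v"
      using \<open>a \<noteq> 0\<close> \<open>\<delta> \<noteq> 0\<close> by (simp add: x1_def k2_def field_simps)
    have y: "y1 + \<delta> / a * v + k1 * (x0 + a * u + b * v) = y0 + c * u + d * v"
      using \<open>a \<noteq> 0\<close> by (simp add: y1_def k1_def \<delta>_def field_simps)
    show "g2 (x1 + a * fst p, y1 + \<delta> / a * snd p) = g (x0 + a * fst p + b * snd p, y0 + c * fst p + d * snd p)"
      by (simp only: p g2_def g1_def prod.sel x y)
  qed
  finally show ?thesis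
    using \<open>a \<noteq> 0\<close> by (simp add: \<delta>_def abs_divide)
qed

lemma emeasure_lborel_vimage_affine:
  fixes S :: "(real \<times> real) set"
  assumes "S \<in> sets borel" and "a \<noteq> 0" "a * d - b * c \<noteq> 0"
  shows "emeasure lborel S = ennreal \<bar>a * d - b * c\<bar> *
           emeasure lborel {p. (x0 + a * fst p + b * snd p, y0 + c * fst p + d * snd p) \<in> S}"
proof -
  have "emeasure lborel S = (\<integral>\<^sup>+p. indicator S p \<partial>lborel)"
    using assms by simp
  also have "\<dots> = ennreal \<bar>a * d - b * c\<bar> *
      (\<integral>\<^sup>+p. indicator S (x0 + a * fst p + b * snd p, y0 + c * fst p + d * snd p) \<partial>lborel)"
    using assms by (intro nn_integral_lborel_affine) auto
  also have "(\<integral>\<^sup>+p. indicator S (x0 + a * fst p + b * snd p, y0 + c * fst p + d * snd p) \<partial>lborel)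
      = emeasure lborel {p. (x0 + a * fst p + b * snd p, y0 + c * fst p + d * snd p) \<in> S}"
  proof (subst nn_integral_indicator[symmetric])
    have "(\<lambda>p. (x0 + a * fst p + b * snd p, y0 + c * fst p + d * snd p)) \<in> borel \<rightarrow>\<^sub>M borel"
      unfolding borel_prod[symmetric] by measurable
    from measurable_sets[OF this assms(1)]
    show "{p. (x0 + a * fst p + b * snd p, y0 + c * fst p + d * snd p) \<in> S} \<in> sets lborel"
      by (simp add: vimage_def)
  qed (auto intro!: nn_integral_cong simp: indicator_def)
  finally show ?thesis .
qed

lemma quadratic_roots_Vieta:
  fixes a b c x1 x2 :: real
  assumes "a * x1\<^sup>2 + b * x1 + c = 0" "a * x2\<^sup>2 + b * x2 + c = 0" "x1 \<noteq> x2"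
  shows "b = - a * (x1 + x2)" "c = a * x1 * x2"
proof -
  have "(x1 - x2) * (a * (x1 + x2) + b) = 0"
    using assms(1,2) by (simp add: algebra_simps power2_eq_square)
  with assms(3) show b: "b = - a * (x1 + x2)"
    by simp
  show "c = a * x1 * x2"
    using assms(1) unfolding b by (simp add: algebra_simps power2_eq_square)
qed

lemma both_in_unit_interval_iff:
  fixes x1 x2 :: real
  shows "x1 \<in> {0<..<1} \<and> x2 \<in> {0<..<1} \<longleftrightarrow>
         0 < x1 * x2 \<and> 0 < (1 - x1) * (1 - x2) \<and> 0 < x1 + x2 \<and> x1 + x2 < 2"
  by (auto simp: zero_less_mult_iff)

lemma two_roots_in_unit_interval_iff:
  fixes a b c :: real
  assumes "a + b + c < 0"
  shows "(\<exists>x1 x2. x1 \<noteq> x2 \<and> x1 \<in> {0<..<1} \<and> x2 \<in> {0<..<1} \<and>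
            a * x1\<^sup>2 + b * x1 + c = 0 \<and> a * x2\<^sup>2 + b * x2 + c = 0) \<longleftrightarrow>
         a < 0 \<and> c < 0 \<and> discrim a b c > 0 \<and> 0 < - b / (2 * a) \<and> - b / (2 * a) < 1"
    (is "?roots \<longleftrightarrow> ?coeffs")
proof
  assume ?roots
  then obtain x1 x2 where x: "x1 \<noteq> x2" "x1 \<in> {0<..<1}" "x2 \<in> {0<..<1}"
    and roots: "a * x1\<^sup>2 + b * x1 + c = 0" "a * x2\<^sup>2 + b * x2 + c = 0"
    by blast
  note b = quadratic_roots_Vieta(1)[OF roots x(1)] and c = quadratic_roots_Vieta(2)[OF roots x(1)]
  have "a * ((1 - x1) * (1 - x2)) < 0"
    using assms by (simp add: b c algebra_simps)
  moreover have "0 < (1 - x1) * (1 - x2)" "0 < x1 * x2"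
    using x both_in_unit_interval_iff by blast+
  ultimately have "a < 0"
    using mult_less_0_iff[of a "(1 - x1) * (1 - x2)"] by linarith
  moreover have "discrim a b c = a\<^sup>2 * (x1 - x2)\<^sup>2"
    by (simp add: discrim_def b c power2_eq_square algebra_simps)
  ultimately show ?coeffs
    using x \<open>0 < x1 * x2\<close> by (auto simp: c b mult_neg_pos mult.assoc)
next
  assume ?coeffs
  then have "a \<noteq> 0"
    by simp
  with \<open>?coeffs\<close> obtain x1 x2 where "x1 \<noteq> x2"
    and roots: "a * x1\<^sup>2 + b * x1 + c = 0" "a * x2\<^sup>2 + b * x2 + c = 0"
    using discriminant_pos_ex by blast
  note b = quadratic_roots_Vieta(1)[OF roots \<open>x1 \<noteq> x2\<close>]
    and c = quadratic_roots_Vieta(2)[OF roots \<open>x1 \<noteq> x2\<close>]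
  have "- b / (2 * a) = (x1 + x2) / 2"
    using \<open>a \<noteq> 0\<close> by (simp add: b)
  moreover have "a * (x1 * x2) < 0" "a * ((1 - x1) * (1 - x2)) < 0"
    using \<open>?coeffs\<close> assms by (auto simp: b c algebra_simps)
  ultimately have "x1 \<in> {0<..<1} \<and> x2 \<in> {0<..<1}"
    unfolding both_in_unit_interval_iff using \<open>?coeffs\<close> by (auto simp: mult_less_0_iff)
  then show ?roots
    using \<open>x1 \<noteq> x2\<close> roots by blast
qed

lemma card_roots_in_unit_interval_eq_3_iff:
  fixes a b c :: real
  assumes "a + b + c \<noteq> 0"
  shows "card {x \<in> {0..1}. x * (a * x\<^sup>2 + b * x + c) = 0} = 3 \<longleftrightarrow>
         (\<exists>x1 x2. x1 \<noteq> x2 \<and> x1 \<in> {0<..<1} \<and> x2 \<in> {0<..<1} \<and>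
            a * x1\<^sup>2 + b * x1 + c = 0 \<and> a * x2\<^sup>2 + b * x2 + c = 0)"
    (is "card ?R = 3 \<longleftrightarrow> ?roots")
proof
  assume "card ?R = 3"
  moreover have "0 \<in> ?R"
    by simp
  ultimately have "card (?R - {0}) = 2"
    by (simp add: card_Diff_singleton_if)
  then obtain x1 x2 where "?R - {0} = {x1, x2}" "x1 \<noteq> x2"
    by (meson card_2_iff)
  moreover have "x \<in> {0<..<1} \<and> a * x\<^sup>2 + b * x + c = 0" if "x \<in> ?R - {0}" for x
    using that assms by (cases "x = 1") auto
  ultimately show ?roots
    by blast
next
  assume ?roots
  then obtain x1 x2 where x: "x1 \<noteq> x2" "x1 \<in> {0<..<1}" "x2 \<in> {0<..<1}"
    and roots: "a * x1\<^sup>2 + b * x1 + c = 0" "a * x2\<^sup>2 + b * x2 + c = 0"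
    by blast
  note b = quadratic_roots_Vieta(1)[OF roots x(1)] and c = quadratic_roots_Vieta(2)[OF roots x(1)]
  have "a \<noteq> 0"
    using assms by (auto simp: b c)
  have "a * x\<^sup>2 + b * x + c = a * (x - x1) * (x - x2)" for x
    by (simp add: b c algebra_simps power2_eq_square)
  then have "?R = {0, x1, x2}"
    using x \<open>a \<noteq> 0\<close> by auto
  then show "card ?R = 3"
    using x by auto
qed

lemma emeasure_indep_uniform_pair:
  fixes X Y :: "'a \<Rightarrow> real"
  assumes "prob_space M"
    and X: "distributed M lborel X (indicator I)" and Y: "distributed M lborel Y (indicator J)"
    and "prob_space.indep_var M borel X borel Y" and A: "A \<in> sets borel"
  shows "emeasure M ((\<lambda>\<omega>. (X \<omega>, Y \<omega>)) -` A \<inter> space M) = emeasure lborel (A \<inter> I \<times> J)"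
proof -
  interpret prob_space M
    by fact
  have "indep_var lborel X lborel Y"
    using \<open>indep_var borel X borel Y\<close>
    by (simp add: indep_var_def indep_vars_def case_bool_if cong: if_cong)
  then have "distributed M (lborel \<Otimes>\<^sub>M lborel) (\<lambda>\<omega>. (X \<omega>, Y \<omega>))
      (\<lambda>(x, y). indicator I x * indicator J y)"
    using X Y by (intro distributed_joint_indep) (auto intro: lborel.sigma_finite_measure_axioms)
  moreover have "A \<in> sets (lborel \<Otimes>\<^sub>M lborel)"
    using A by (simp only: lborel_prod sets_lborel)
  ultimately have "emeasure M ((\<lambda>\<omega>. (X \<omega>, Y \<omega>)) -` A \<inter> space M)
      = (\<integral>\<^sup>+p. (\<lambda>(x, y). indicator I x * indicator J y) p * indicator A p \<partial>(lborel \<Otimes>\<^sub>M lborel))"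
    by (rule distributed_emeasure)
  also have "\<dots> = (\<integral>\<^sup>+p. indicator (A \<inter> I \<times> J) p \<partial>lborel)"
    unfolding lborel_prod by (intro nn_integral_cong) (auto simp: indicator_def)
  moreover have "I \<in> sets borel" "J \<in> sets borel"
    using distributed_borel_measurable[OF X] distributed_borel_measurable[OF Y]
    by (simp_all add: borel_measurable_indicator_iff)
  then have "A \<inter> I \<times> J \<in> sets borel"
    using A by (simp add: borel_prod[symmetric])
  ultimately show ?thesis
    by simp
qed

definition mix :: "real \<Rightarrow> real \<times> real \<Rightarrow> real \<times> real" where
  "mix q p = ((1 - q) * fst p + q * snd p, q * fst p + (1 - q) * snd p)"

lemma linear_mix: "linear (mix q)"
  unfolding mix_def by (intro linearI) (auto simp: algebra_simps)

lemma inj_mix: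
  assumes "q \<noteq> 1 / 2"
  shows "inj (mix q)"
proof (rule injI)
  fix p p' assume "mix q p = mix q p'"
  then have "(1 - q) * (fst p - fst p') + q * (snd p - snd p') = 0"
    and "q * (fst p - fst p') + (1 - q) * (snd p - snd p') = 0"
    by (auto simp: mix_def algebra_simps)
  then have "(1 - 2 * q) * ((fst p - fst p') - (snd p - snd p')) = 0"
    and "(fst p - fst p') + (snd p - snd p') = 0"
    by (simp_all add: algebra_simps)
  with assms show "p = p'"
    by (simp add: prod_eq_iff)
qed

lemma region_D1_eq_image_mix:
  assumes "q \<noteq> 1 / 2"
  shows "region_D1 q = mix q ` ({-1<..<0} \<times> {-1<..<0})"
proof -
  have "{(-1, -1), (-(1 - q), -q), (0, 0), (-q, -(1 - q))} = mix q ` ({-1, 0} \<times> {-1, 0})"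
    by (auto simp: mix_def)
  then have "region_D1 q = interior (mix q ` (convex hull ({-1, 0} \<times> {-1, 0})))"
    by (simp add: region_D1_def convex_hull_linear_image linear_mix)
  also have "\<dots> = mix q ` interior (convex hull ({-1, 0} \<times> {-1, 0}))"
    by (rule interior_injective_linear_image[OF linear_mix inj_mix[OF assms]])
  also have "convex hull ({-1, 0::real} \<times> {-1, 0::real}) = {-1..0} \<times> {-1..0}"
    unfolding convex_hull_Times by (simp add: convex_hull_eq_real_cbox cbox_interval)
  finally show ?thesis
    by (simp add: interior_Times)
qed

lemma emeasure_lborel_vimage_mix:
  assumes "S \<in> sets borel" and "q < 1 / 2"
  shows "emeasure lborel S = ennreal (1 - 2 * q) * emeasure lborel {p. mix q (fst p - 1, snd p) \<in> S}"
proof -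
  have det: "(1 - q) * (1 - q) - q * q = 1 - 2 * q"
    by algebra
  have "emeasure lborel S = ennreal \<bar>(1 - q) * (1 - q) - q * q\<bar> *
      emeasure lborel {p. (- (1 - q) + (1 - q) * fst p + q * snd p, - q + q * fst p + (1 - q) * snd p) \<in> S}"
    by (rule emeasure_lborel_vimage_affine) (use assms det in auto)
  also have "\<bar>(1 - q) * (1 - q) - q * q\<bar> = 1 - 2 * q"
    using assms(2) det by simp
  also have "{p. (- (1 - q) + (1 - q) * fst p + q * snd p, - q + q * fst p + (1 - q) * snd p) \<in> S}
      = {p. mix q (fst p - 1, snd p) \<in> S}"
    by (simp add: mix_def algebra_simps)
  finally show ?thesis .
qed

lemma P_TS_factor:
  "P_TS q t s x = x * ((t + s - 1) * x\<^sup>2 + (1 - t - 2 * s + q * (s - 1 - t)) * x + (s + q * (t - s)))"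
  by (simp add: P_TS_def algebra_simps power2_eq_square power3_eq_cube)

lemma card_roots_P_TS_eq_3_iff:
  fixes q t s :: real
  assumes "0 < q"
  defines "a \<equiv> t + s - 1" and "b \<equiv> 1 - t - 2 * s + q * (s - 1 - t)" and "c \<equiv> s + q * (t - s)"
  shows "card {x \<in> {0..1}. P_TS q t s x = 0} = 3 \<longleftrightarrow>
         a < 0 \<and> c < 0 \<and> discrim a b c > 0 \<and> 0 < - b / (2 * a) \<and> - b / (2 * a) < 1"
proof -
  have "a + b + c = - q"
    by (simp add: a_def b_def c_def algebra_simps)
  then show ?thesis
    using assms(1) card_roots_in_unit_interval_eq_3_iff[of a b c] two_roots_in_unit_interval_iff[of a b c]
    by (simp add: P_TS_factor a_def b_def c_def)
qed

lemma three_roots_set_borel: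
  assumes "0 < q"
  shows "{p. card {x \<in> {0..1}. P_TS q (fst p) (snd p) x = 0} = 3} \<in> sets borel"
proof -
  have "Measurable.pred (borel \<Otimes>\<^sub>M borel) (\<lambda>p. card {x \<in> {0..1}. P_TS q (fst p) (snd p) x = 0} = 3)"
    unfolding card_roots_P_TS_eq_3_iff[OF assms] discrim_def by measurable
  then show ?thesis
    by (simp only: pred_def borel_prod space_borel) simp
qed

lemma card_roots_P_TS_eq_3_iff_region_D:
  fixes q t s :: real
  assumes q: "0 < q" "q < 1" and t: "0 < t" "t < 1" and s: "-1 < s" "s < 0"
  shows "card {x \<in> {0..1}. P_TS q t s x = 0} = 3 \<longleftrightarrow> mix q (t - 1, s) \<in> region_D q"
proof -
  obtain u v where uv: "mix q (t - 1, s) = (u, v)"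
    by fastforce
  have u: "u = (1 - q) * (t - 1) + q * s" and v: "v = q * (t - 1) + (1 - q) * s"
    using uv by (auto simp: mix_def)
  have "u \<in> {-1<..<0}"
    using convexD[of "{-1<..<0}" "t - 1" s "1 - q" q] q t s
    by (simp add: u)
  moreover have "discrim (u + v) (- (u + 2 * v + 2 * q)) (v + q) = u\<^sup>2 + 4 * q * (v + q)"
    by (simp add: discrim_def algebra_simps power2_eq_square)
  moreover have "u\<^sup>2 + 4 * q * (v + q) > 0 \<longleftrightarrow> - u\<^sup>2 / (4 * q) - q < v"
    using q by (simp add: field_simps) linarith
  moreover have "card {x \<in> {0..1}. P_TS q t s x = 0} = 3 \<longleftrightarrow>
      u + v < 0 \<and> v + q < 0 \<and> discrim (u + v) (- (u + 2 * v + 2 * q)) (v + q) > 0 \<and>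
      0 < (u + 2 * v + 2 * q) / (2 * (u + v)) \<and> (u + 2 * v + 2 * q) / (2 * (u + v)) < 1"
    using card_roots_P_TS_eq_3_iff[OF q(1), of t s] by (simp add: u v algebra_simps)
  ultimately show ?thesis
    using q by (auto simp: uv region_D_def zero_less_divide_iff divide_less_eq)
qed

lemma region_D_borel: "region_D q \<in> sets borel"
proof -
  have "Measurable.pred (borel \<Otimes>\<^sub>M borel)
      (\<lambda>(x, y). -1 < x \<and> x < 0 \<and> - (x ^ 2) / (4 * q) - q < y \<and> y < - q)"
    by measurable
  then show ?thesis
    by (simp only: pred_def borel_prod region_D_def space_borel) simp
qed

lemma three_roots_Int_square_eq_vimage_mix:
  assumes "0 < q" "q < 1 / 2"
  shows "{p. card {x \<in> {0..1}. P_TS q (fst p) (snd p) x = 0} = 3} \<inter> {0<..<1} \<times> {-1<..<0}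
       = {p. mix q (fst p - 1, snd p) \<in> region_D q \<inter> region_D1 q}"
proof -
  have "inj (mix q)"
    using assms by (intro inj_mix) simp
  then have "mix q (t - 1, s) \<in> region_D1 q \<longleftrightarrow> (t, s) \<in> {0<..<1} \<times> {-1<..<0}" for t s
    using assms by (auto simp: region_D1_eq_image_mix inj_image_mem_iff)
  then show ?thesis
    using card_roots_P_TS_eq_3_iff_region_D[of q] assms by auto
qed

theorem proposition2p2:
  fixes M :: "'a measure" and T S :: "'a \<Rightarrow> real" and q :: real
  assumes "prob_space M"
    and "0 < q" and "q < 1 / 2"
    and "distributed M lborel T (\<lambda>x. indicator {0<..<1} x)"
    and "distributed M lborel S (\<lambda>x. indicator {-1<..<0} x)"
    and "prob_space.indep_var M borel T borel S"
  shows "measure M {\<omega> \<in> space M. card {x \<in> {0..1}. P_TS q (T \<omega>) (S \<omega>) x = 0} = 3}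
           = 1 / (1 - 2 * q) * measure lborel (region_D q \<inter> region_D1 q)"
proof -
  define E where "E = {\<omega> \<in> space M. card {x \<in> {0..1}. P_TS q (T \<omega>) (S \<omega>) x = 0} = 3}"
  define A where "A = {p. card {x \<in> {0..1}. P_TS q (fst p) (snd p) x = 0} = 3}"
  define D where "D = region_D q \<inter> region_D1 q"
  have "A \<in> sets borel"
    unfolding A_def by (rule three_roots_set_borel[OF assms(2)])
  have "emeasure M E = emeasure M ((\<lambda>\<omega>. (T \<omega>, S \<omega>)) -` A \<inter> space M)"
    by (rule arg_cong[where f = "emeasure M"]) (auto simp: E_def A_def)
  also have "\<dots> = emeasure lborel (A \<inter> {0<..<1} \<times> {-1<..<0})"
    using emeasure_indep_uniform_pair[OF assms(1,4,5,6) \<open>A \<in> sets borel\<close>] by simp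
  also have "\<dots> = emeasure lborel {p. mix q (fst p - 1, snd p) \<in> D}"
    using three_roots_Int_square_eq_vimage_mix assms(2,3) by (simp add: A_def D_def)
  finally have "ennreal (1 - 2 * q) * emeasure M E = emeasure lborel D"
    using emeasure_lborel_vimage_mix[of D q] region_D_borel assms(3)
    by (simp add: D_def region_D1_def borel_open)
  then have "enn2real (ennreal (1 - 2 * q) * emeasure M E) = measure lborel D"
    by (simp add: measure_def)
  then have "(1 - 2 * q) * measure M E = measure lborel D"
    using assms(3) by (simp add: measure_def enn2real_mult)
  then show ?thesis
    using assms(3) by (simp add: E_def D_def field_simps)
qed

end
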